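(* Let $\mathcal C\subseteq\{0,1,2\}^n$ be a ternary code all of whose codewords have $\ell_1$-weight $w$. Then $\mathcal C$ is an $(n,2w-2,w)_3$ code if and only if both of the following hold: (a') the cliques $K_u$, $u\in\mathcal C$, form a packing of $K_n$ (i.e., they are pairwise edge-disjoint); (b') each position $i\in[n]$ is colored by $2$ in at most one codeword, i.e., there is at most one $u\in\mathcal C$ with $u_i=2$.
   Context: The $\ell_1$-distance between $u,v\in\{0,1,2\}^n$ is $\sum_i|u_i-v_i|$ and the $\ell_1$-weight of $u$ is its distance to $0$. An $(n,d,w)_3$ code is a set of vectors in $\{0,1,2\}^n$ each of $\ell_1$-weight $w$ with pairwise $\ell_1$-distance at least $d$. $K_n$ is the complete graph on vertex set $[n]$. For $u\in\{0,1,2\}^n$, $K_u$ is the complete subgraph of $K_n$ on vertex set $\mathrm{supp}(u)=\{i:u_i\ne0\}$, with vertex $i$ colored by $u_i$. A packing of a graph is a set of subgraphs such that each edge lies in at most one of them. *)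

theory Defs
  imports Main
begin

text \<open>Ternary vectors of length n: functions nat => nat, positions 0..n-1 (standing for [n]),
  entries in {0,1,2}, zero outside the positions.\<close>
definition ternary_vec :: "nat \<Rightarrow> (nat \<Rightarrow> nat) \<Rightarrow> bool" where
  "ternary_vec n u \<longleftrightarrow> (\<forall>i<n. u i \<le> 2) \<and> (\<forall>i\<ge>n. u i = 0)"

definition l1_dist :: "nat \<Rightarrow> (nat \<Rightarrow> nat) \<Rightarrow> (nat \<Rightarrow> nat) \<Rightarrow> int" where
  "l1_dist n u v = (\<Sum>i<n. \<bar>int (u i) - int (v i)\<bar>)"

definition l1_weight :: "nat \<Rightarrow> (nat \<Rightarrow> nat) \<Rightarrow> int" where
  "l1_weight n u = l1_dist n u (\<lambda>_. 0)"

definition is_code3 :: "nat \<Rightarrow> int \<Rightarrow> int \<Rightarrow> (nat \<Rightarrow> nat) set \<Rightarrow> bool" where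
  "is_code3 n d w C \<longleftrightarrow>
     (\<forall>u\<in>C. ternary_vec n u \<and> l1_weight n u = w) \<and>
     (\<forall>u\<in>C. \<forall>v\<in>C. u \<noteq> v \<longrightarrow> l1_dist n u v \<ge> d)"

definition supp :: "nat \<Rightarrow> (nat \<Rightarrow> nat) \<Rightarrow> nat set" where
  "supp n u = {i. i < n \<and> u i \<noteq> 0}"

definition clique_edges :: "nat \<Rightarrow> (nat \<Rightarrow> nat) \<Rightarrow> nat set set" where
  "clique_edges n u = {{i, j} | i j. i \<in> supp n u \<and> j \<in> supp n u \<and> i \<noteq> j}"

definition clique_packing :: "nat \<Rightarrow> (nat \<Rightarrow> nat) set \<Rightarrow> bool" where
  "clique_packing n C \<longleftrightarrow>
     (\<forall>u\<in>C. \<forall>v\<in>C. u \<noteq> v \<longrightarrow> clique_edges n u \<inter> clique_edges n v = {})"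

end

theory Submission
  imports Defs
begin

text \<open>Since \<open>|a - b| = a + b - 2 min a b\<close>, the distance of two words of weight \<open>w\<close> is
  \<open>2w - 2 m\<close>, where \<open>m\<close> is the weight of their componentwise minimum. Hence distance
  \<open>\<ge> 2w - 2\<close> means \<open>m \<le> 1\<close>: the supports meet in at most one position, and there
  not both words carry a 2. Supports meeting in at most one vertex is exactly edge-disjointness of
  the cliques.\<close>

definition l1_overlap :: "nat \<Rightarrow> (nat \<Rightarrow> nat) \<Rightarrow> (nat \<Rightarrow> nat) \<Rightarrow> nat" where
  "l1_overlap n u v = (\<Sum>i<n. min (u i) (v i))"

lemma l1_dist_eq_weights_minus_overlap:
  "l1_dist n u v = l1_weight n u + l1_weight n v - 2 * int (l1_overlap n u v)"
proof -
  have "\<bar>int (u i) - int (v i)\<bar> = int (u i) + int (v i) - 2 * int (min (u i) (v i))" for i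
    by (simp add: min_def)
  then show ?thesis
    by (simp add: l1_dist_def l1_weight_def l1_overlap_def sum.distrib sum_subtractf
        sum_distrib_left)
qed

lemma sum_nat_le_one_iff:
  fixes f :: "'a \<Rightarrow> nat"
  assumes "finite A"
  shows "sum f A \<le> 1 \<longleftrightarrow>
    (\<forall>i\<in>A. \<forall>j\<in>A. f i \<noteq> 0 \<longrightarrow> f j \<noteq> 0 \<longrightarrow> i = j) \<and> (\<forall>i\<in>A. f i \<le> 1)"
proof
  assume le: "sum f A \<le> 1"
  have "i = j" if "i \<in> A" "j \<in> A" "f i \<noteq> 0" "f j \<noteq> 0" for i j
  proof (rule ccontr)
    assume "i \<noteq> j"
    then have "f i + f j = sum f {i, j}" by simp
    also have "\<dots> \<le> sum f A" using that assms by (intro sum_mono2) auto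
    finally show False using le that by linarith
  qed
  moreover have "f i \<le> 1" if "i \<in> A" for i
    using member_le_sum[OF that _ assms, of f] le by simp
  ultimately show "(\<forall>i\<in>A. \<forall>j\<in>A. f i \<noteq> 0 \<longrightarrow> f j \<noteq> 0 \<longrightarrow> i = j) \<and> (\<forall>i\<in>A. f i \<le> 1)"
    by blast
next
  assume H: "(\<forall>i\<in>A. \<forall>j\<in>A. f i \<noteq> 0 \<longrightarrow> f j \<noteq> 0 \<longrightarrow> i = j) \<and> (\<forall>i\<in>A. f i \<le> 1)"
  show "sum f A \<le> 1"
  proof (cases "\<exists>i\<in>A. f i \<noteq> 0")
    case True
    then obtain i where i: "i \<in> A" "f i \<noteq> 0" by blast
    have "sum f A = sum f {i}"
      using H i assms by (intro sum.mono_neutral_right) auto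
    then show ?thesis using H i by simp
  qed simp
qed

lemma clique_edges_disjoint_iff:
  "clique_edges n u \<inter> clique_edges n v = {} \<longleftrightarrow>
    (\<forall>i\<in>supp n u \<inter> supp n v. \<forall>j\<in>supp n u \<inter> supp n v. i = j)"
  unfolding clique_edges_def by (auto simp: doubleton_eq_iff)

lemma l1_overlap_le_one_iff:
  assumes "ternary_vec n u" and "ternary_vec n v"
  shows "l1_overlap n u v \<le> 1 \<longleftrightarrow>
    clique_edges n u \<inter> clique_edges n v = {} \<and> \<not> (\<exists>i<n. u i = 2 \<and> v i = 2)"
proof -
  have "min (u i) (v i) \<le> 1 \<longleftrightarrow> \<not> (u i = 2 \<and> v i = 2)" if "i < n" for i
    using assms that unfolding ternary_vec_def by (auto simp: min_def)
  then show ?thesis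
    unfolding l1_overlap_def sum_nat_le_one_iff[OF finite_lessThan] clique_edges_disjoint_iff
    by (auto simp: supp_def)
qed

lemma l1_dist_ge_iff_cliques_disjoint:
  assumes "ternary_vec n u" "ternary_vec n v"
    and "l1_weight n u = int w" "l1_weight n v = int w"
  shows "2 * int w - 2 \<le> l1_dist n u v \<longleftrightarrow>
    clique_edges n u \<inter> clique_edges n v = {} \<and> \<not> (\<exists>i<n. u i = 2 \<and> v i = 2)"
proof -
  have "2 * int w - 2 \<le> l1_dist n u v \<longleftrightarrow> l1_overlap n u v \<le> 1"
    using l1_dist_eq_weights_minus_overlap[of n u v] assms(3,4) by linarith
  then show ?thesis
    using l1_overlap_le_one_iff[OF assms(1,2)] by blast
qed

theorem corollary1:
  fixes n w :: nat and C :: "(nat \<Rightarrow> nat) set"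
  assumes "\<forall>u\<in>C. ternary_vec n u"
    and "\<forall>u\<in>C. l1_weight n u = int w"
  shows "is_code3 n (2 * int w - 2) (int w) C \<longleftrightarrow>
         (clique_packing n C \<and> (\<forall>i<n. \<forall>u\<in>C. \<forall>v\<in>C. u i = 2 \<and> v i = 2 \<longrightarrow> u = v))"
proof -
  have "is_code3 n (2 * int w - 2) (int w) C \<longleftrightarrow>
    (\<forall>u\<in>C. \<forall>v\<in>C. u \<noteq> v \<longrightarrow>
      clique_edges n u \<inter> clique_edges n v = {} \<and> \<not> (\<exists>i<n. u i = 2 \<and> v i = 2))"
    using assms l1_dist_ge_iff_cliques_disjoint unfolding is_code3_def by (metis (no_types, lifting))
  then show ?thesis
    unfolding clique_packing_def by blast
qed

end
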